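(* Let $\mathcal A_V$ be the algebra of Laurent polynomials in $a_V,b_V,c_V,d_V$ with the log-canonical Poisson bracket $\{a_V,b_V\}=a_Vb_V$, $\{a_V,c_V\}=0$, $\{a_V,d_V\}=-\tfrac12 a_Vd_V$, $\{b_V,c_V\}=0$, $\{b_V,d_V\}=-\tfrac12 b_Vd_V$, $\{c_V,d_V\}=-\tfrac12 c_Vd_V$. Let $\mathcal A_{III}$ be the algebra of Laurent polynomials in $a,b,c,d,e,f,g,h$ with the log-canonical bracket $\{a,b\}=\tfrac12 ab,\ \{a,c\}=0,\ \{a,d\}=-\tfrac14 ad,\ \{a,e\}=\tfrac14 ae,\ \{a,f\}=\tfrac14 af,\ \{a,g\}=-\tfrac14 ag,\ \{a,h\}=\tfrac14 ah,$ $\{b,c\}=0,\ \{b,d\}=-\tfrac14 bd,\ \{b,e\}=\tfrac14 be,\ \{b,f\}=-\tfrac14 bf,\ \{b,g\}=-\tfrac14 bg,\ \{b,h\}=\tfrac14 bh,$ $\{c,d\}=-\tfrac12 cd,\ \{c,e\}=\tfrac12 ce,\ \{c,f\}=\{c,g\}=\{c,h\}=0,$ $\{d,e\}=0,\ \{d,f\}=\tfrac14 df,\ \{d,g\}=\{d,h\}=0,$ $\{e,f\}=-\tfrac14 ef,\ \{e,g\}=\{e,h\}=0,\ \{f,g\}=\tfrac14 fg,\ \{f,h\}=-\tfrac14 fh,\ \{h,g\}=0$. Then the assignment $a_V\mapsto af$, $b_V\mapsto bf$, $c_V\mapsto c$, $d_V\mapsto d$ defines an injective Poisson homomorphism $\mathcal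 A_V\to\mathcal A_{III}$, realising $\mathcal A_V$ as the Poisson subalgebra of functions of $af,bf,c,d$; moreover $h$ and $g$ Poisson commute with this subalgebra.
   Context: A log-canonical bracket is extended from the generators to all Laurent polynomials by bilinearity, antisymmetry and the Leibniz rule. *)

theory Defs
  imports Complex_Main "HOL-Library.Poly_Mapping"
begin

text \<open>A Laurent polynomial is a finitely supported map from integer exponent vectors
  (finitely supported maps 'v to int) to real coefficients; the ring structure is the
  convolution product of Poly_Mapping.\<close>

type_synonym 'v laurent = "('v \<Rightarrow>\<^sub>0 int) \<Rightarrow>\<^sub>0 real"

definition lvar :: "'v \<Rightarrow> 'v laurent" where
  "lvar v = Poly_Mapping.single (Poly_Mapping.single v 1) 1"

text \<open>This is the unique extension of the bracket on the generators by bilinearity,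
  antisymmetry and the Leibniz rule.\<close>

definition lc_form :: "('v \<Rightarrow> 'v \<Rightarrow> real) \<Rightarrow> ('v \<Rightarrow>\<^sub>0 int) \<Rightarrow> ('v \<Rightarrow>\<^sub>0 int) \<Rightarrow> real" where
  "lc_form Om al be =
     (\<Sum>i\<in>Poly_Mapping.keys al. \<Sum>j\<in>Poly_Mapping.keys be. of_int (Poly_Mapping.lookup al i) * of_int (Poly_Mapping.lookup be j) * Om i j)"

definition lc_bracket :: "('v \<Rightarrow> 'v \<Rightarrow> real) \<Rightarrow> 'v laurent \<Rightarrow> 'v laurent \<Rightarrow> 'v laurent" where
  "lc_bracket Om p q =
     (\<Sum>al\<in>Poly_Mapping.keys p. \<Sum>be\<in>Poly_Mapping.keys q.
        Poly_Mapping.single (al + be) (Poly_Mapping.lookup p al * Poly_Mapping.lookup q be * lc_form Om al be))"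

definition exp_subst :: "('v \<Rightarrow> ('w \<Rightarrow>\<^sub>0 int)) \<Rightarrow> ('v \<Rightarrow>\<^sub>0 int) \<Rightarrow> ('w \<Rightarrow>\<^sub>0 int)" where
  "exp_subst E al = (\<Sum>i\<in>Poly_Mapping.keys al. Poly_Mapping.map (\<lambda>k. Poly_Mapping.lookup al i * k) (E i))"

definition mono_subst :: "('v \<Rightarrow> ('w \<Rightarrow>\<^sub>0 int)) \<Rightarrow> 'v laurent \<Rightarrow> 'w laurent" where
  "mono_subst E p = (\<Sum>al\<in>Poly_Mapping.keys p. Poly_Mapping.single (exp_subst E al) (Poly_Mapping.lookup p al))"

datatype varV = aV | bV | cV | dV
datatype var3 = A | B | C | D | E | F | G | H

fun upV :: "varV \<Rightarrow> varV \<Rightarrow> real" where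
  "upV aV bV = 1"
| "upV aV dV = -1/2"
| "upV bV dV = -1/2"
| "upV cV dV = -1/2"
| "upV _ _ = 0"

definition OmV :: "varV \<Rightarrow> varV \<Rightarrow> real" where
  "OmV x y = upV x y - upV y x"

fun up3 :: "var3 \<Rightarrow> var3 \<Rightarrow> real" where
  "up3 A B = 1/2"
| "up3 A D = -1/4"
| "up3 A E = 1/4"
| "up3 A F = 1/4"
| "up3 A G = -1/4"
| "up3 A H = 1/4"
| "up3 B D = -1/4"
| "up3 B E = 1/4"
| "up3 B F = -1/4"
| "up3 B G = -1/4"
| "up3 B H = 1/4"
| "up3 C D = -1/2"
| "up3 C E = 1/2"
| "up3 D F = 1/4"
| "up3 E F = -1/4"
| "up3 F G = 1/4"
| "up3 F H = -1/4"
| "up3 _ _ = 0"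

definition Om3 :: "var3 \<Rightarrow> var3 \<Rightarrow> real" where
  "Om3 x y = up3 x y - up3 y x"

fun imgV :: "varV \<Rightarrow> (var3 \<Rightarrow>\<^sub>0 int)" where
  "imgV aV = Poly_Mapping.single A 1 + Poly_Mapping.single F 1"
| "imgV bV = Poly_Mapping.single B 1 + Poly_Mapping.single F 1"
| "imgV cV = Poly_Mapping.single C 1"
| "imgV dV = Poly_Mapping.single D 1"

definition phi :: "varV laurent \<Rightarrow> var3 laurent" where
  "phi = mono_subst imgV"

end

theory Submission
  imports Defs
begin

text \<open>Such a substitution is always a ring homomorphism, and it is injective as soon as the induced
  map on exponent vectors is. Because the log-canonical form on monomials is bilinear in the
  exponent vectors, the substitution is Poisson exactly when the form of \<open>\<A>\<^sub>I\<^sub>I\<^sub>I\<close> pulled back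
  along these four exponent vectors is the form of \<open>\<A>\<^sub>V\<close>, a check on generators; likewise
  \<open>h\<close> and \<open>g\<close> bracket to zero with the image because their exponent vectors pair to zero
  with the four vectors.\<close>

lemma lookup_map_scale [simp]:
  fixes c :: "'a::mult_zero"
  shows "Poly_Mapping.lookup (Poly_Mapping.map (\<lambda>k. c * k) p) i = c * Poly_Mapping.lookup p i"
  by (simp add: map.rep_eq when_def)

lemma keys_map_scale:
  fixes c :: "'a::mult_zero"
  shows "Poly_Mapping.keys (Poly_Mapping.map (\<lambda>k. c * k) p) \<subseteq> Poly_Mapping.keys p"
  by (auto simp: in_keys_iff)

lemma sum_single_lookup_keys:
  "(\<Sum>a\<in>Poly_Mapping.keys p. Poly_Mapping.single a (Poly_Mapping.lookup p a)) = p"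
  by (rule poly_mapping_eqI) (simp add: lookup_sum lookup_single when_def in_keys_iff)

lemma lc_form_superset:
  assumes "finite S" "Poly_Mapping.keys al \<subseteq> S" "finite T" "Poly_Mapping.keys be \<subseteq> T"
  shows "lc_form Om al be = (\<Sum>i\<in>S. \<Sum>j\<in>T.
           of_int (Poly_Mapping.lookup al i) * of_int (Poly_Mapping.lookup be j) * Om i j)"
proof -
  have "(\<Sum>j\<in>Poly_Mapping.keys be. of_int (Poly_Mapping.lookup al i) * of_int (Poly_Mapping.lookup be j) * Om i j)
      = (\<Sum>j\<in>T. of_int (Poly_Mapping.lookup al i) * of_int (Poly_Mapping.lookup be j) * Om i j)" for i
    by (rule sum.mono_neutral_left) (use assms in \<open>auto simp: in_keys_iff\<close>)
  then show ?thesis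
    unfolding lc_form_def
    by (simp, intro sum.mono_neutral_left) (use assms in \<open>auto simp: in_keys_iff\<close>)
qed

lemma lc_form_add_left: "lc_form Om (al + al') be = lc_form Om al be + lc_form Om al' be"
  using keys_add[of al al']
  by (simp add: lc_form_superset[where S = "Poly_Mapping.keys al \<union> Poly_Mapping.keys al'"
        and T = "Poly_Mapping.keys be"] lookup_add algebra_simps sum.distrib)

lemma lc_form_add_right: "lc_form Om al (be + be') = lc_form Om al be + lc_form Om al be'"
  using keys_add[of be be']
  by (simp add: lc_form_superset[where T = "Poly_Mapping.keys be \<union> Poly_Mapping.keys be'"
        and S = "Poly_Mapping.keys al"] lookup_add algebra_simps sum.distrib)

lemma lc_form_scale_left:
  "lc_form Om (Poly_Mapping.map (\<lambda>k. c * k) al) be = of_int c * lc_form Om al be"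
  using keys_map_scale[of c al]
  by (simp add: lc_form_superset[where S = "Poly_Mapping.keys al" and T = "Poly_Mapping.keys be"]
        sum_distrib_left)
    (simp add: algebra_simps)

lemma lc_form_scale_right:
  "lc_form Om al (Poly_Mapping.map (\<lambda>k. c * k) be) = of_int c * lc_form Om al be"
  using keys_map_scale[of c be]
  by (simp add: lc_form_superset[where S = "Poly_Mapping.keys al" and T = "Poly_Mapping.keys be"]
        sum_distrib_left)
    (simp add: algebra_simps)

lemma lc_form_zero_left [simp]: "lc_form Om 0 be = 0"
  by (simp add: lc_form_def)

lemma lc_form_zero_right [simp]: "lc_form Om al 0 = 0"
  by (simp add: lc_form_def)

lemma lc_form_sum_left: "lc_form Om (sum f S) be = (\<Sum>s\<in>S. lc_form Om (f s) be)"
  by (induction S rule: infinite_finite_induct) (auto simp: lc_form_add_left)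

lemma lc_form_sum_right: "lc_form Om al (sum f S) = (\<Sum>s\<in>S. lc_form Om al (f s))"
  by (induction S rule: infinite_finite_induct) (auto simp: lc_form_add_right)

lemma lc_form_exp_subst_left:
  "lc_form Om (exp_subst img al) be
     = (\<Sum>i\<in>Poly_Mapping.keys al. of_int (Poly_Mapping.lookup al i) * lc_form Om (img i) be)"
  by (simp add: exp_subst_def lc_form_sum_left lc_form_scale_left)

lemma lc_form_exp_subst_right:
  "lc_form Om al (exp_subst img be)
     = (\<Sum>j\<in>Poly_Mapping.keys be. of_int (Poly_Mapping.lookup be j) * lc_form Om al (img j))"
  by (simp add: exp_subst_def lc_form_sum_right lc_form_scale_right)

lemma lc_form_exp_subst:
  "lc_form Om (exp_subst img al) (exp_subst img be) = lc_form (\<lambda>i j. lc_form Om (img i) (img j)) al be"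
  unfolding lc_form_exp_subst_left
  unfolding lc_form_exp_subst_right
  by (simp add: lc_form_def[of "\<lambda>i j. lc_form Om (img i) (img j)"] sum_distrib_left mult.assoc)

lemma lookup_exp_subst:
  assumes "finite S" "Poly_Mapping.keys al \<subseteq> S"
  shows "Poly_Mapping.lookup (exp_subst img al) w
           = (\<Sum>i\<in>S. Poly_Mapping.lookup al i * Poly_Mapping.lookup (img i) w)"
  unfolding exp_subst_def lookup_sum lookup_map_scale
  by (rule sum.mono_neutral_left) (use assms in \<open>auto simp: in_keys_iff\<close>)

lemma exp_subst_add: "exp_subst img (al + be) = exp_subst img al + exp_subst img be"
proof (rule poly_mapping_eqI)
  let ?S = "Poly_Mapping.keys al \<union> Poly_Mapping.keys be"
  fix w
  show "Poly_Mapping.lookup (exp_subst img (al + be)) w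
      = Poly_Mapping.lookup (exp_subst img al + exp_subst img be) w"
    using keys_add[of al be]
    by (simp add: lookup_exp_subst[where S = ?S] lookup_add algebra_simps sum.distrib)
qed

lemma exp_subst_zero [simp]: "exp_subst img 0 = 0"
  by (simp add: exp_subst_def)

lemma exp_subst_single_one [simp]: "exp_subst img (Poly_Mapping.single v 1) = img v"
  by (rule poly_mapping_eqI) (simp add: lookup_exp_subst[where S = "{v}"])

lemma lc_bracket_superset:
  assumes "finite S" "Poly_Mapping.keys p \<subseteq> S" "finite T" "Poly_Mapping.keys q \<subseteq> T"
  shows "lc_bracket Om p q = (\<Sum>al\<in>S. \<Sum>be\<in>T. Poly_Mapping.single (al + be)
           (Poly_Mapping.lookup p al * Poly_Mapping.lookup q be * lc_form Om al be))"
proof -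
  have "(\<Sum>be\<in>Poly_Mapping.keys q. Poly_Mapping.single (al + be)
          (Poly_Mapping.lookup p al * Poly_Mapping.lookup q be * lc_form Om al be))
      = (\<Sum>be\<in>T. Poly_Mapping.single (al + be)
          (Poly_Mapping.lookup p al * Poly_Mapping.lookup q be * lc_form Om al be))" for al
    by (rule sum.mono_neutral_left) (use assms in \<open>auto simp: in_keys_iff\<close>)
  then show ?thesis
    unfolding lc_bracket_def
    by (simp, intro sum.mono_neutral_left) (use assms in \<open>auto simp: in_keys_iff\<close>)
qed

lemma lc_bracket_add_left: "lc_bracket Om (p + p') q = lc_bracket Om p q + lc_bracket Om p' q"
  using keys_add[of p p']
  by (simp add: lc_bracket_superset[where S = "Poly_Mapping.keys p \<union> Poly_Mapping.keys p'"
        and T = "Poly_Mapping.keys q"] lookup_add algebra_simps single_add sum.distrib)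

lemma lc_bracket_add_right: "lc_bracket Om p (q + q') = lc_bracket Om p q + lc_bracket Om p q'"
  using keys_add[of q q']
  by (simp add: lc_bracket_superset[where T = "Poly_Mapping.keys q \<union> Poly_Mapping.keys q'"
        and S = "Poly_Mapping.keys p"] lookup_add algebra_simps single_add sum.distrib)

lemma lc_bracket_zero_left [simp]: "lc_bracket Om 0 q = 0"
  by (simp add: lc_bracket_def)

lemma lc_bracket_zero_right [simp]: "lc_bracket Om p 0 = 0"
  by (simp add: lc_bracket_def)

lemma lc_bracket_sum_left: "lc_bracket Om (sum f S) q = (\<Sum>s\<in>S. lc_bracket Om (f s) q)"
  by (induction S rule: infinite_finite_induct) (auto simp: lc_bracket_add_left)

lemma lc_bracket_sum_right: "lc_bracket Om p (sum f S) = (\<Sum>s\<in>S. lc_bracket Om p (f s))"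
  by (induction S rule: infinite_finite_induct) (auto simp: lc_bracket_add_right)

lemma lc_bracket_single:
  "lc_bracket Om (Poly_Mapping.single al c) (Poly_Mapping.single be d)
     = Poly_Mapping.single (al + be) (c * d * lc_form Om al be)"
  by (simp add: lc_bracket_superset[where S = "{al}" and T = "{be}"])

lemma mono_subst_superset:
  assumes "finite S" "Poly_Mapping.keys p \<subseteq> S"
  shows "mono_subst img p
           = (\<Sum>al\<in>S. Poly_Mapping.single (exp_subst img al) (Poly_Mapping.lookup p al))"
  unfolding mono_subst_def
  by (rule sum.mono_neutral_left) (use assms in \<open>auto simp: in_keys_iff\<close>)

lemma mono_subst_add: "mono_subst img (p + q) = mono_subst img p + mono_subst img q"
  using keys_add[of p q]
  by (simp add: mono_subst_superset[where S = "Poly_Mapping.keys p \<union> Poly_Mapping.keys q"]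
        lookup_add single_add sum.distrib)

lemma mono_subst_zero [simp]: "mono_subst img 0 = 0"
  by (simp add: mono_subst_def)

lemma mono_subst_sum: "mono_subst img (sum f S) = (\<Sum>s\<in>S. mono_subst img (f s))"
  by (induction S rule: infinite_finite_induct) (auto simp: mono_subst_add)

lemma mono_subst_single [simp]:
  "mono_subst img (Poly_Mapping.single al c) = Poly_Mapping.single (exp_subst img al) c"
  by (simp add: mono_subst_superset[where S = "{al}"])

lemma mono_subst_one: "mono_subst img 1 = 1"
  by (metis exp_subst_zero mono_subst_single single_one)

lemma mono_subst_lvar: "mono_subst img (lvar v) = Poly_Mapping.single (img v) 1"
  by (simp add: lvar_def)

lemma mono_subst_mult: "mono_subst img (p * q) = mono_subst img p * mono_subst img q"
proof -
  have "mono_subst img (p * q)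
      = mono_subst img ((\<Sum>al\<in>Poly_Mapping.keys p. Poly_Mapping.single al (Poly_Mapping.lookup p al))
          * (\<Sum>be\<in>Poly_Mapping.keys q. Poly_Mapping.single be (Poly_Mapping.lookup q be)))"
    by (simp only: sum_single_lookup_keys)
  also have "\<dots> = mono_subst img p * mono_subst img q"
    by (simp add: mono_subst_def[of img p] mono_subst_def[of img q] sum_distrib_left sum_distrib_right
        mult_single mono_subst_sum exp_subst_add)
  finally show ?thesis .
qed

lemma mono_subst_lc_bracket:
  assumes pullback: "\<And>i j. lc_form Om' (img i) (img j) = Om i j"
  shows "mono_subst img (lc_bracket Om p q) = lc_bracket Om' (mono_subst img p) (mono_subst img q)"
proof -
  have "mono_subst img (lc_bracket Om p q)
      = mono_subst img (lc_bracket Om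
          (\<Sum>al\<in>Poly_Mapping.keys p. Poly_Mapping.single al (Poly_Mapping.lookup p al))
          (\<Sum>be\<in>Poly_Mapping.keys q. Poly_Mapping.single be (Poly_Mapping.lookup q be)))"
    by (simp only: sum_single_lookup_keys)
  also have "\<dots> = lc_bracket Om' (mono_subst img p) (mono_subst img q)"
    by (simp add: mono_subst_def[of img p] mono_subst_def[of img q] lc_bracket_sum_left
        lc_bracket_sum_right lc_bracket_single mono_subst_sum exp_subst_add lc_form_exp_subst pullback)
  finally show ?thesis .
qed

lemma lookup_mono_subst:
  assumes "inj (exp_subst img)"
  shows "Poly_Mapping.lookup (mono_subst img p) (exp_subst img al) = Poly_Mapping.lookup p al"
  using assms
  by (simp add: mono_subst_def lookup_sum lookup_single when_def in_keys_iff inj_eq)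

lemma inj_mono_subst:
  assumes "inj (exp_subst img)"
  shows "inj (mono_subst img)"
  by (rule injI, rule poly_mapping_eqI) (metis lookup_mono_subst[OF assms])

lemma lc_bracket_single_mono_subst_eq_0:
  assumes "\<And>v. lc_form Om al (img v) = 0"
  shows "lc_bracket Om (Poly_Mapping.single al c) (mono_subst img p) = 0"
  by (simp add: mono_subst_def lc_bracket_sum_right lc_bracket_single lc_form_exp_subst_right assms)

lemma lc_form_finite:
  fixes al be :: "'v::finite \<Rightarrow>\<^sub>0 int"
  shows "lc_form Om al be = (\<Sum>i\<in>UNIV. \<Sum>j\<in>UNIV.
           of_int (Poly_Mapping.lookup al i) * of_int (Poly_Mapping.lookup be j) * Om i j)"
  by (rule lc_form_superset) simp_all

lemma lookup_exp_subst_finite: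
  fixes al :: "'v::finite \<Rightarrow>\<^sub>0 int"
  shows "Poly_Mapping.lookup (exp_subst img al) w
           = (\<Sum>i\<in>UNIV. Poly_Mapping.lookup al i * Poly_Mapping.lookup (img i) w)"
  by (rule lookup_exp_subst) simp_all

lemma UNIV_varV: "(UNIV :: varV set) = {aV, bV, cV, dV}"
  using varV.exhaust by blast

lemma UNIV_var3: "(UNIV :: var3 set) = {A, B, C, D, E, F, G, H}"
  using var3.exhaust by blast

instance varV :: finite
  by standard (simp add: UNIV_varV)

instance var3 :: finite
  by standard (simp add: UNIV_var3)

lemma lc_form_Om3_imgV: "lc_form Om3 (imgV v) (imgV w) = OmV v w"
  by (cases v; cases w) (simp_all add: lc_form_finite UNIV_var3 lookup_add lookup_single Om3_def OmV_def)

lemma lc_form_Om3_H_imgV: "lc_form Om3 (Poly_Mapping.single H 1) (imgV v) = 0"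
  by (cases v) (simp_all add: lc_form_finite UNIV_var3 lookup_add lookup_single Om3_def)

lemma lc_form_Om3_G_imgV: "lc_form Om3 (Poly_Mapping.single G 1) (imgV v) = 0"
  by (cases v) (simp_all add: lc_form_finite UNIV_var3 lookup_add lookup_single Om3_def)

lemma inj_exp_subst_imgV: "inj (exp_subst imgV)"
proof (rule injI, rule poly_mapping_eqI)
  fix al be v
  assume eq: "exp_subst imgV al = exp_subst imgV be"
  have recover: "Poly_Mapping.lookup ga v = Poly_Mapping.lookup (exp_subst imgV ga)
      (case v of aV \<Rightarrow> A | bV \<Rightarrow> B | cV \<Rightarrow> C | dV \<Rightarrow> D)" for ga
    by (cases v) (simp_all add: lookup_exp_subst_finite UNIV_varV lookup_add lookup_single)
  show "Poly_Mapping.lookup al v = Poly_Mapping.lookup be v"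
    using recover[of al] recover[of be] eq by simp
qed

theorem mainTheorem6:
  shows "phi (lvar aV) = lvar A * lvar F
       \<and> phi (lvar bV) = lvar B * lvar F
       \<and> phi (lvar cV) = lvar C
       \<and> phi (lvar dV) = lvar D
       \<and> phi 1 = 1
       \<and> (\<forall>p q. phi (p + q) = phi p + phi q)
       \<and> (\<forall>p q. phi (p * q) = phi p * phi q)
       \<and> (\<forall>p q. phi (lc_bracket OmV p q) = lc_bracket Om3 (phi p) (phi q))
       \<and> inj phi
       \<and> (\<forall>x\<in>range phi. \<forall>y\<in>range phi. lc_bracket Om3 x y \<in> range phi)
       \<and> (\<forall>p. lc_bracket Om3 (lvar H) (phi p) = 0)
       \<and> (\<forall>p. lc_bracket Om3 (lvar G) (phi p) = 0)"
proof -
  have poisson: "phi (lc_bracket OmV p q) = lc_bracket Om3 (phi p) (phi q)" for p q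
    unfolding phi_def using lc_form_Om3_imgV by (rule mono_subst_lc_bracket)
  have closed: "lc_bracket Om3 x y \<in> range phi" if "x \<in> range phi" "y \<in> range phi" for x y
    using that by (auto simp flip: poisson)
  have casimir: "lc_bracket Om3 (lvar H) (phi p) = 0" "lc_bracket Om3 (lvar G) (phi p) = 0" for p
    unfolding phi_def lvar_def
    by (simp_all add: lc_bracket_single_mono_subst_eq_0 lc_form_Om3_H_imgV lc_form_Om3_G_imgV)
  show ?thesis
    using poisson closed casimir inj_mono_subst[OF inj_exp_subst_imgV]
    by (simp add: phi_def mono_subst_lvar lvar_def mult_single mono_subst_one mono_subst_add mono_subst_mult)
qed

end
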